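(* Let $(X,\langle\cdot,\cdot\rangle)$ be a real inner product space, $n\ge 2$, and $x,y,x_2,\ldots,x_n\in X$. Then $(x,y\mid x_n,\ldots,x_2)_*=E_n\cdot\langle x,y\mid x_n,\ldots,x_2\rangle$, where $E_2=1$ and, for $n\ge3$, $E_n=\prod_{k=2}^{n-1}\langle x_k,x_k\mid x_{k-1},\ldots,x_2\rangle^{2^{n-k-1}}$.
   Context: The $n$-iterated $2$-inner product is defined recursively: for $n=2$, $(x,y\mid z)_*:=\langle x,y\rangle\langle z,z\rangle-\langle x,z\rangle\langle z,y\rangle$; for $n\ge3$, $(x,y\mid x_n,\ldots,x_2)_*:=(x,y\mid x_{n-1},\ldots,x_2)_*\,(x_n,x_n\mid x_{n-1},\ldots,x_2)_*-(x,x_n\mid x_{n-1},\ldots,x_2)_*\,(x_n,y\mid x_{n-1},\ldots,x_2)_*$. The standard $m$-inner product ($m\ge2$) is $\langle v,w\mid v_2,\ldots,v_m\rangle:=\det(\langle a_i,b_j\rangle)_{1\le i,j\le m}$ with $(a_1,\ldots,a_m)=(v,v_2,\ldots,v_m)$ and $(b_1,\ldots,b_m)=(w,v_2,\ldots,v_m)$; in particular $\langle x,y\mid x_n,\ldots,x_2\rangle$ is the determinant of the matrix with rows indexed by $x,x_n,\ldots,x_2$ and columns indexed by $y,x_n,\ldots,x_2$. By convention, for $m=1$ (the factor $k=2$ in $E_n$), $\langle x_2,x_2\mid x_1,\ldots,x_2\rangle$ means $\langle x_2,x_2\rangle$. *)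

theory Defs
  imports "HOL-Analysis.Inner_Product" "Jordan_Normal_Form.Determinant"
begin

definition std_mip :: "'a::real_inner \<Rightarrow> 'a \<Rightarrow> 'a list \<Rightarrow> real" where
  "std_mip v w vs =
     det (mat (Suc (length vs)) (Suc (length vs))
       (\<lambda>(i, j). inner ((v # vs) ! i) ((w # vs) ! j)))"

text \<open>n-iterated 2-inner product (x, y | x_n, ..., x_2)_*, where the vectors
  x_2, ..., x_n are given by xs 2, ..., xs n.  Meaningful for n \<ge> 2
  (for n < 2 it just returns the n = 2 value).\<close>
function istar :: "'a::real_inner \<Rightarrow> 'a \<Rightarrow> (nat \<Rightarrow> 'a) \<Rightarrow> nat \<Rightarrow> real" where
  "istar x y xs n =
     (if n \<le> 2 then inner x y * inner (xs 2) (xs 2) - inner x (xs 2) * inner (xs 2) y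
      else istar x y xs (n - 1) * istar (xs n) (xs n) xs (n - 1)
           - istar x (xs n) xs (n - 1) * istar (xs n) y xs (n - 1))"
  by pat_completeness auto
termination by (relation "measure (\<lambda>(_, _, _, n). n)") auto

end

theory Submission
  imports Defs
begin

text \<open>Write G(vs) for the Gram determinant of the list vs.  The key step is the
  Sylvester-type identity
  \<langle>x,y|vs\<rangle> \<langle>z,z|vs\<rangle> - \<langle>x,z|vs\<rangle> \<langle>z,y|vs\<rangle> = G(vs) \<langle>x,y|z,vs\<rangle>.
  If the Gram matrix of vs is invertible, taking the Schur complement of that block
  turns every determinant \<langle>u,w|us,vs\<rangle> into G(vs) times the determinant of the matrix
  of inner products of the components of u, us and w, us orthogonal to span vs;
  for a single extra row this is the 1x1 case and for z the 2x2 case, which gives the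
  identity.  If the Gram matrix is singular, some nontrivial combination of vs is zero,
  so all determinants in the identity vanish.  Feeding the induction hypothesis
  (x,y|x_n,...,x_2)_* = E_n \<langle>x,y|x_n,...,x_2\<rangle> into the recursion for the iterated
  product then gives E_{n+1} = E_n^2 G(x_n,...,x_2).\<close>

lemma det_dim_2:
  assumes "A \<in> carrier_mat 2 2"
  shows "det A = A $$ (0,0) * A $$ (1,1) - A $$ (0,1) * A $$ (1,0)"
proof -
  have "det A = (\<Sum>j<2. A $$ (0,j) * cofactor A 0 j)"
    by (rule laplace_expansion_row[OF assms]) simp
  also have "\<dots> = A $$ (0,0) * cofactor A 0 0 + A $$ (0,1) * cofactor A 0 1"
    by (simp add: numeral_2_eq_2)
  also have "cofactor A 0 0 = A $$ (1,1)"
    unfolding cofactor_def using assms by (subst det_single) (auto simp: mat_delete_def)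
  also have "cofactor A 0 1 = - A $$ (1,0)"
    unfolding cofactor_def using assms by (subst det_single) (auto simp: mat_delete_def)
  finally show ?thesis by simp
qed

lemma index_mult_mat_3:
  fixes P :: "'b::comm_semiring_1 mat"
  assumes "P \<in> carrier_mat p m" "Q \<in> carrier_mat m m" "R \<in> carrier_mat m q"
    and "i < p" "j < q"
  shows "(P * Q * R) $$ (i,j) = (\<Sum>k<m. \<Sum>l<m. P $$ (i,k) * Q $$ (k,l) * R $$ (l,j))"
  using assms by (simp add: scalar_prod_def lessThan_atLeast0 sum_distrib_left mult.assoc)

lemma det_four_block_mat_schur:
  fixes A :: "'b::field mat"
  assumes A: "A \<in> carrier_mat n n" and B: "B \<in> carrier_mat n m" and C: "C \<in> carrier_mat m n"
    and D: "D \<in> carrier_mat m m" and Di: "Di \<in> carrier_mat m m" and DiD: "Di * D = 1\<^sub>m m"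
  shows "det (four_block_mat A B C D) = det D * det (A - B * Di * C)"
proof -
  have BDi: "B * Di \<in> carrier_mat n m" using B Di by auto
  have S: "A - B * Di * C \<in> carrier_mat n n" using A B Di C by auto
  have "four_block_mat A B C D = four_block_mat (1\<^sub>m n) (B * Di) (0\<^sub>m m n) (1\<^sub>m m) *
     four_block_mat (A - B * Di * C) (0\<^sub>m n m) C D"
  proof -
    have "1\<^sub>m n * (A - B * Di * C) + B * Di * C = A"
      using A B C Di by (intro eq_matI) auto
    moreover have "1\<^sub>m n * 0\<^sub>m n m + B * Di * D = B"
      using B by (simp add: assoc_mult_mat[OF B Di D] DiD)
    moreover have "0\<^sub>m m n * (A - B * Di * C) + 1\<^sub>m m * C = C"
      using C by (simp add: left_mult_zero_mat[OF S])
    moreover have "0\<^sub>m m n * 0\<^sub>m n m + 1\<^sub>m m * D = D"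
      using D by simp
    ultimately show ?thesis
      by (simp only: mult_four_block_mat[OF one_carrier_mat BDi zero_carrier_mat one_carrier_mat
            S zero_carrier_mat C D])
  qed
  then have "det (four_block_mat A B C D) = det (four_block_mat (1\<^sub>m n) (B * Di) (0\<^sub>m m n) (1\<^sub>m m)) *
     det (four_block_mat (A - B * Di * C) (0\<^sub>m n m) C D)"
    using BDi S C D by (simp add: det_mult[of _ "n + m"] four_block_carrier_mat)
  also have "det (four_block_mat (1\<^sub>m n) (B * Di) (0\<^sub>m m n) (1\<^sub>m m)) = 1"
    by (simp add: det_four_block_mat_lower_left_zero[OF one_carrier_mat BDi refl one_carrier_mat])
  also have "det (four_block_mat (A - B * Di * C) (0\<^sub>m n m) C D) = det (A - B * Di * C) * det D"
    by (rule det_four_block_mat_upper_right_zero[OF S refl C D])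
  finally show ?thesis by simp
qed

definition gram_mat :: "'a::real_inner list \<Rightarrow> real mat" where
  "gram_mat vs = mat (length vs) (length vs) (\<lambda>(i,j). inner (vs ! i) (vs ! j))"

lemma gram_mat_carrier [simp]: "gram_mat vs \<in> carrier_mat (length vs) (length vs)"
  unfolding gram_mat_def by auto

lemma std_mip_self_eq_det_gram_mat: "std_mip v v vs = det (gram_mat (v # vs))"
  unfolding std_mip_def gram_mat_def by simp

text \<open>For Di the inverse of the Gram matrix of vs, this is the inner product of the
  components of a and b orthogonal to the span of vs.\<close>

definition schur_inner :: "'a::real_inner list \<Rightarrow> real mat \<Rightarrow> 'a \<Rightarrow> 'a \<Rightarrow> real" where
  "schur_inner vs Di a b =
     inner a b - (\<Sum>k<length vs. \<Sum>l<length vs. inner a (vs ! k) * Di $$ (k,l) * inner (vs ! l) b)"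

lemma det_inner_mat_append_eq_det_gram_mat_mult:
  fixes vs :: "'a::real_inner list"
  assumes us: "length us = k" and ws: "length ws = k"
    and Di: "Di \<in> carrier_mat (length vs) (length vs)" and DiG: "Di * gram_mat vs = 1\<^sub>m (length vs)"
  shows "det (mat (k + length vs) (k + length vs) (\<lambda>(i,j). inner ((us @ vs) ! i) ((ws @ vs) ! j)))
    = det (gram_mat vs) * det (mat k k (\<lambda>(i,j). schur_inner vs Di (us ! i) (ws ! j)))"
proof -
  let ?m = "length vs"
  let ?A = "mat k k (\<lambda>(i,j). inner (us ! i) (ws ! j))"
  let ?B = "mat k ?m (\<lambda>(i,j). inner (us ! i) (vs ! j))"
  let ?C = "mat ?m k (\<lambda>(i,j). inner (vs ! i) (ws ! j))"
  have blocks: "mat (k + ?m) (k + ?m) (\<lambda>(i,j). inner ((us @ vs) ! i) ((ws @ vs) ! j))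
     = four_block_mat ?A ?B ?C (gram_mat vs)"
    using us ws by (intro eq_matI) (auto simp: nth_append gram_mat_def)
  have schur: "?A - ?B * Di * ?C = mat k k (\<lambda>(i,j). schur_inner vs Di (us ! i) (ws ! j))"
  proof (rule eq_matI)
    fix i j assume "i < dim_row (mat k k (\<lambda>(i,j). schur_inner vs Di (us ! i) (ws ! j)))"
      and "j < dim_col (mat k k (\<lambda>(i,j). schur_inner vs Di (us ! i) (ws ! j)))"
    then have "i < k" "j < k" by auto
    then have "(?B * Di * ?C) $$ (i,j) = (\<Sum>a<?m. \<Sum>b<?m. ?B $$ (i,a) * Di $$ (a,b) * ?C $$ (b,j))"
      by (intro index_mult_mat_3[OF _ Di]) auto
    with \<open>i < k\<close> \<open>j < k\<close> show "(?A - ?B * Di * ?C) $$ (i,j) =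
        mat k k (\<lambda>(i,j). schur_inner vs Di (us ! i) (ws ! j)) $$ (i,j)"
      using Di by (simp add: schur_inner_def)
  qed (use Di in auto)
  show ?thesis
    unfolding blocks by (subst det_four_block_mat_schur[OF _ _ _ gram_mat_carrier Di DiG]) (auto simp: schur)
qed

text \<open>A kernel vector c of the Gram matrix gives \<Sum>c_j v_j = 0, and then c (shifted
  by one) is a left kernel vector of every matrix defining std_mip a b vs.\<close>

lemma std_mip_eq_0_if_det_gram_mat_eq_0:
  fixes vs :: "'a::real_inner list"
  assumes "det (gram_mat vs) = 0"
  shows "std_mip a b vs = 0"
proof -
  let ?m = "length vs"
  obtain c where c: "c \<in> carrier_vec ?m" "c \<noteq> 0\<^sub>v ?m" "gram_mat vs *\<^sub>v c = 0\<^sub>v ?m"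
    using det_0_iff_vec_prod_zero[OF gram_mat_carrier] assms by blast
  define w where "w = (\<Sum>j<?m. c $ j *\<^sub>R vs ! j)"
  have inner_w: "inner (vs ! i) w = 0" if "i < ?m" for i
  proof -
    have "(gram_mat vs *\<^sub>v c) $ i = 0" using c(3) that by simp
    then show ?thesis
      using that c(1) by (simp add: w_def gram_mat_def scalar_prod_def lessThan_atLeast0
          inner_sum_right mult.commute)
  qed
  have "inner w w = (\<Sum>j<?m. c $ j * inner (vs ! j) w)"
    unfolding w_def by (simp add: inner_sum_left)
  then have w: "w = 0" using inner_w by simp
  obtain i0 where i0: "i0 < ?m" "c $ i0 \<noteq> 0"
    using c(1,2) by (metis eq_vecI carrier_vecD index_zero_vec)
  let ?M = "mat (Suc ?m) (Suc ?m) (\<lambda>(i, j). inner ((a # vs) ! i) ((b # vs) ! j))"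
  define u where "u = vec (Suc ?m) (\<lambda>i. if i = 0 then 0 else c $ (i - 1))"
  have "u $ Suc i0 \<noteq> 0" using i0 by (simp add: u_def)
  then have u: "u \<noteq> 0\<^sub>v (Suc ?m)" using i0 by auto
  have u_carrier: "u \<in> carrier_vec (Suc ?m)" by (simp add: u_def)
  have "transpose_mat ?M *\<^sub>v u = 0\<^sub>v (Suc ?m)"
  proof (rule eq_vecI)
    fix j assume j: "j < dim_vec (0\<^sub>v (Suc ?m))"
    then have "(transpose_mat ?M *\<^sub>v u) $ j = (\<Sum>i<Suc ?m. inner ((a # vs) ! i) ((b # vs) ! j) * u $ i)"
      by (simp add: u_def scalar_prod_def lessThan_atLeast0)
    also have "\<dots> = (\<Sum>i<?m. inner (vs ! i) ((b # vs) ! j) * c $ i)"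
      by (subst sum.lessThan_Suc_shift) (simp add: u_def)
    also have "\<dots> = inner w ((b # vs) ! j)"
      by (simp add: w_def inner_sum_left mult.commute)
    finally show "(transpose_mat ?M *\<^sub>v u) $ j = 0\<^sub>v (Suc ?m) $ j"
      using j w by simp
  qed simp
  then have "det (transpose_mat ?M) = 0"
    using det_0_iff_vec_prod_zero[of "transpose_mat ?M" "Suc ?m"] u u_carrier by auto
  then show ?thesis
    unfolding std_mip_def by (simp add: det_transpose[of ?M "Suc ?m"])
qed

lemma std_mip_sylvester:
  fixes vs :: "'a::real_inner list"
  shows "std_mip x y vs * std_mip z z vs - std_mip x z vs * std_mip z y vs
    = det (gram_mat vs) * std_mip x y (z # vs)"
proof (cases "det (gram_mat vs) = 0")
  case True
  then show ?thesis by (simp add: std_mip_eq_0_if_det_gram_mat_eq_0)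
next
  case False
  let ?m = "length vs"
  obtain Di where Di: "Di \<in> carrier_mat ?m ?m" "Di * gram_mat vs = 1\<^sub>m ?m"
    using det_non_zero_imp_unit[OF gram_mat_carrier False, of "()"]
    unfolding Units_def ring_mat_def by auto
  let ?s = "schur_inner vs Di"
  have one: "std_mip a b vs = det (gram_mat vs) * ?s a b" for a b
  proof -
    have "std_mip a b vs =
        det (mat (1 + ?m) (1 + ?m) (\<lambda>(i,j). inner (([a] @ vs) ! i) (([b] @ vs) ! j)))"
      by (simp add: std_mip_def)
    also have "\<dots> = det (gram_mat vs) * det (mat 1 1 (\<lambda>(i,j). ?s ([a] ! i) ([b] ! j)))"
      by (rule det_inner_mat_append_eq_det_gram_mat_mult[OF _ _ Di]) auto
    finally show ?thesis by (simp add: det_single)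
  qed
  have two: "std_mip x y (z # vs) = det (gram_mat vs) * (?s x y * ?s z z - ?s x z * ?s z y)"
  proof -
    have "std_mip x y (z # vs) =
        det (mat (2 + ?m) (2 + ?m) (\<lambda>(i,j). inner (([x,z] @ vs) ! i) (([y,z] @ vs) ! j)))"
      by (simp add: std_mip_def)
    also have "\<dots> = det (gram_mat vs) * det (mat 2 2 (\<lambda>(i,j). ?s ([x,z] ! i) ([y,z] ! j)))"
      by (rule det_inner_mat_append_eq_det_gram_mat_mult[OF _ _ Di]) auto
    finally show ?thesis by (simp add: det_dim_2)
  qed
  show ?thesis
    unfolding one two by (simp add: algebra_simps)
qed

lemma istar_2: "istar x y xs 2 = std_mip x y [xs 2]"
proof -
  have "std_mip x y [xs 2] = det (mat 2 2 (\<lambda>(i,j). inner ([x, xs 2] ! i) ([y, xs 2] ! j)))"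
    by (simp add: std_mip_def numeral_2_eq_2)
  also have "\<dots> = inner x y * inner (xs 2) (xs 2) - inner x (xs 2) * inner (xs 2) y"
    by (subst det_dim_2) auto
  finally show ?thesis by simp
qed

lemma prod_power_two_pow_Suc:
  fixes f :: "nat \<Rightarrow> 'b::comm_semiring_1"
  assumes "n \<ge> 2"
  shows "(\<Prod>k\<in>{2..Suc n - 1}. f k ^ 2 ^ (Suc n - k - 1)) = (\<Prod>k\<in>{2..n - 1}. f k ^ 2 ^ (n - k - 1))\<^sup>2 * f n"
proof -
  have "{2..Suc n - 1} = insert n {2..n - 1}" using assms by auto
  then have "(\<Prod>k\<in>{2..Suc n - 1}. f k ^ 2 ^ (Suc n - k - 1)) = f n * (\<Prod>k\<in>{2..n - 1}. f k ^ 2 ^ (Suc n - k - 1))"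
    using assms by simp
  also have "(\<Prod>k\<in>{2..n - 1}. f k ^ 2 ^ (Suc n - k - 1)) = (\<Prod>k\<in>{2..n - 1}. (f k ^ 2 ^ (n - k - 1))\<^sup>2)"
  proof (rule prod.cong[OF refl])
    fix k assume "k \<in> {2..n - 1}"
    then have "Suc n - k - 1 = Suc (n - k - 1)" by auto
    then show "f k ^ 2 ^ (Suc n - k - 1) = (f k ^ 2 ^ (n - k - 1))\<^sup>2"
      by (simp add: power_mult[symmetric] mult.commute)
  qed
  finally show ?thesis by (simp add: prod_power_distrib[symmetric] mult.commute)
qed

theorem theorem3p1:
  fixes x y :: "'a::real_inner" and xs :: "nat \<Rightarrow> 'a" and n :: nat
  assumes "n \<ge> 2"
  shows "istar x y xs n =
    (\<Prod>k\<in>{2..n-1}. std_mip (xs k) (xs k) (map xs (rev [2..<k])) ^ (2 ^ (n - k - 1)))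
    * std_mip x y (map xs (rev [2..<Suc n]))"
  using assms
proof (induction n arbitrary: x y rule: nat_induct_at_least)
  case base
  show ?case by (simp del: istar.simps add: istar_2)
next
  case (Suc n)
  let ?E = "\<lambda>n. \<Prod>k\<in>{2..n-1}. std_mip (xs k) (xs k) (map xs (rev [2..<k])) ^ (2 ^ (n - k - 1))"
  let ?vs = "map xs (rev [2..<Suc n])"
  let ?z = "xs (Suc n)"
  have gram: "det (gram_mat ?vs) = std_mip (xs n) (xs n) (map xs (rev [2..<n]))"
    using Suc.hyps by (simp add: std_mip_self_eq_det_gram_mat)
  have "istar x y xs (Suc n) = istar x y xs n * istar ?z ?z xs n - istar x ?z xs n * istar ?z y xs n"
    using Suc.hyps by simp
  also have "\<dots> = (?E n)\<^sup>2 * (std_mip x y ?vs * std_mip ?z ?z ?vs - std_mip x ?z ?vs * std_mip ?z y ?vs)"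
    unfolding Suc.IH by (simp add: algebra_simps power2_eq_square)
  also have "\<dots> = ?E (Suc n) * std_mip x y (?z # ?vs)"
    unfolding std_mip_sylvester gram prod_power_two_pow_Suc[OF Suc.hyps] by (simp add: mult.assoc)
  finally show ?case using Suc.hyps by (simp del: istar.simps)
qed

end
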